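(* Consider the online asynchronous testing setting with conflict sets described in the context, and suppose that for every $t\in\mathcal{H}^0$ and every $u\in[0,1]$, $\mathbb{P}(P_t\le u\mid\mathcal{F}^{-\mathcal{X}^{E_t}})\le u$. Let $T$ be a random time with values in $\mathbb{N}$ such that (C1) $\{T=t\}\in\mathcal{F}^{-\mathcal{X}^{t+1}}$ for every $t$, and (C2) $T$ is almost surely bounded. Then any LORD* procedure and any SAFFRON* procedure with target level $\alpha$ (with $\mathcal{F}$ the LORD* filtration, respectively the SAFFRON* filtration) satisfy $\mathrm{mFDR}(T)\le\alpha$, where $\mathrm{mFDR}(T)=\mathbb{E}|\mathcal{V}(T)|/\mathbb{E}[|\mathcal{R}(T)|\vee1]$.
   Context: Hypotheses $H_1,H_2,\dots$ are tested; the test of $H_t$ starts at step $t$, is run at a test level $\alpha_t\ge 0$ (and, for SAFFRON*-type procedures, uses a candidacy threshold $\lambda_t$ with $\alpha_t\le\lambda_t<1$), and produces a $p$-value $P_t$. $\mathcal{H}^0\subseteq\mathbb{N}$ is the fixed (unknown) set of indices of true null hypotheses. Each test $t$ has a fixed (deterministic) decision time $E_t\in\mathbb{N}$ with $E_t\ge t$. Let $R_t=\mathbf{1}\{P_t\le\alpha_t\}$ and $C_t=\mathbf{1}\{P_t\le\lambda_t\}$. Let $\{L_t\}$ be a fixed sequence of nonnegative integer lags with $L_{t+1}\le L_t+1$. The conflict set of test $t$ is $\mathcal{X}^t=\{i\in[t-1]:E_i\ge t\}\cup\big(\{t-L_t,\dots,t-1\}\cap[t-1]\big)$. The non-conflicting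 $\sigma$-algebras are $\mathcal{L}^{-\mathcal{X}^t}=\sigma(R_i: i\le t-1,\ i\notin\mathcal{X}^t)$ (LORD* filtration) and $\mathcal{S}^{-\mathcal{X}^t}=\sigma(R_i,C_i: i\le t-1,\ i\notin\mathcal{X}^t)$ (SAFFRON* filtration); $\mathcal{F}^{-\mathcal{X}^t}$ denotes the relevant one. The set of rejections by time $t$ is $\mathcal{R}(t)=\{i\in[t]: E_i\le t,\ P_i\le\alpha_i\}$ and $\mathcal{V}(t)=\mathcal{R}(t)\cap\mathcal{H}^0$. A LORD* procedure is any rule choosing each $\alpha_t\ge0$ to be $\mathcal{L}^{-\mathcal{X}^t}$-measurable such that, for all $t\in\mathbb{N}$, $\sum_{j\le t}\alpha_j\le \alpha\big((\sum_{j<t,\,j\notin\mathcal{X}^t}R_j)\vee1\big)$. A SAFFRON* procedure is any rule choosing $\alpha_t,\lambda_t$ (with $0\le\alpha_t\le\lambda_t<1$) to be $\mathcal{S}^{-\mathcal{X}^t}$-measurable such that, for all $t\in\mathbb{N}$, $\sum_{j<t,\,j\notin\mathcal{X}^t}\frac{\alpha_j}{1-\lambda_j}\mathbf{1}\{P_j>\lambda_j\}+\sum_{j\in\mathcal{X}^t\cup\{t\}}\frac{\alpha_j}{1-\lambda_j}\le\alpha\big((\sum_{j<t,\,j\notin\mathcal{X}^t}R_j)\vee1\big)$. *)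

theory Defs
  imports "HOL-Probability.Probability"
begin

text \<open>Indices of hypotheses are natural numbers t \<ge> 1 (index 0 is unused).
  P t = p-value, alpha t = test level, lam t = candidacy threshold,
  E t = decision time, L t = lag.\<close>

datatype proc_kind = LORD_star | SAFFRON_star

definition conflict_set :: "(nat \<Rightarrow> nat) \<Rightarrow> (nat \<Rightarrow> nat) \<Rightarrow> nat \<Rightarrow> nat set" where
  "conflict_set E L t =
     {i. 1 \<le> i \<and> i \<le> t - 1 \<and> E i \<ge> t} \<union> ({t - L t .. t - 1} \<inter> {1 .. t - 1})"

definition R_ind :: "(nat \<Rightarrow> 'a \<Rightarrow> real) \<Rightarrow> (nat \<Rightarrow> 'a \<Rightarrow> real) \<Rightarrow> nat \<Rightarrow> 'a \<Rightarrow> real" where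
  "R_ind P alpha i \<omega> = (if P i \<omega> \<le> alpha i \<omega> then 1 else 0)"

definition C_ind :: "(nat \<Rightarrow> 'a \<Rightarrow> real) \<Rightarrow> (nat \<Rightarrow> 'a \<Rightarrow> real) \<Rightarrow> nat \<Rightarrow> 'a \<Rightarrow> real" where
  "C_ind P lam i \<omega> = (if P i \<omega> \<le> lam i \<omega> then 1 else 0)"

definition gen_sigma :: "'a measure \<Rightarrow> ('a \<Rightarrow> real) set \<Rightarrow> 'a measure" where
  "gen_sigma M fs = sigma (space M) (\<Union>f\<in>fs. {f -` A \<inter> space M | A. A \<in> sets borel})"

definition noncf :: "(nat \<Rightarrow> nat) \<Rightarrow> (nat \<Rightarrow> nat) \<Rightarrow> nat \<Rightarrow> nat set" where
  "noncf E L t = {i. 1 \<le> i \<and> i \<le> t - 1 \<and> i \<notin> conflict_set E L t}"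

definition noncf_sigma ::
  "proc_kind \<Rightarrow> 'a measure \<Rightarrow> (nat \<Rightarrow> nat) \<Rightarrow> (nat \<Rightarrow> nat) \<Rightarrow> (nat \<Rightarrow> 'a \<Rightarrow> real)
     \<Rightarrow> (nat \<Rightarrow> 'a \<Rightarrow> real) \<Rightarrow> (nat \<Rightarrow> 'a \<Rightarrow> real) \<Rightarrow> nat \<Rightarrow> 'a measure" where
  "noncf_sigma k M E L P alpha lam t =
     (case k of
        LORD_star \<Rightarrow> gen_sigma M {R_ind P alpha i | i. i \<in> noncf E L t}
      | SAFFRON_star \<Rightarrow> gen_sigma M ({R_ind P alpha i | i. i \<in> noncf E L t}
                                      \<union> {C_ind P lam i | i. i \<in> noncf E L t}))"

definition is_LORD_star ::
  "'a measure \<Rightarrow> (nat \<Rightarrow> nat) \<Rightarrow> (nat \<Rightarrow> nat) \<Rightarrow> real \<Rightarrow> (nat \<Rightarrow> 'a \<Rightarrow> real)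
     \<Rightarrow> (nat \<Rightarrow> 'a \<Rightarrow> real) \<Rightarrow> bool" where
  "is_LORD_star M E L lvl P alpha \<longleftrightarrow>
     (\<forall>t\<ge>1. alpha t \<in> borel_measurable (noncf_sigma LORD_star M E L P alpha (\<lambda>_ _. 0) t)) \<and>
     (\<forall>t\<ge>1. \<forall>\<omega>\<in>space M.
        alpha t \<omega> \<ge> 0 \<and>
        (\<Sum>j\<in>{1..t}. alpha j \<omega>) \<le> lvl * max (\<Sum>j\<in>noncf E L t. R_ind P alpha j \<omega>) 1)"

definition is_SAFFRON_star ::
  "'a measure \<Rightarrow> (nat \<Rightarrow> nat) \<Rightarrow> (nat \<Rightarrow> nat) \<Rightarrow> real \<Rightarrow> (nat \<Rightarrow> 'a \<Rightarrow> real)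
     \<Rightarrow> (nat \<Rightarrow> 'a \<Rightarrow> real) \<Rightarrow> (nat \<Rightarrow> 'a \<Rightarrow> real) \<Rightarrow> bool" where
  "is_SAFFRON_star M E L lvl P alpha lam \<longleftrightarrow>
     (\<forall>t\<ge>1. alpha t \<in> borel_measurable (noncf_sigma SAFFRON_star M E L P alpha lam t)) \<and>
     (\<forall>t\<ge>1. lam t \<in> borel_measurable (noncf_sigma SAFFRON_star M E L P alpha lam t)) \<and>
     (\<forall>t\<ge>1. \<forall>\<omega>\<in>space M.
        0 \<le> alpha t \<omega> \<and> alpha t \<omega> \<le> lam t \<omega> \<and> lam t \<omega> < 1 \<and>
        (\<Sum>j\<in>noncf E L t. alpha j \<omega> / (1 - lam j \<omega>) * (if P j \<omega> > lam j \<omega> then 1 else 0))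
        + (\<Sum>j\<in>conflict_set E L t \<union> {t}. alpha j \<omega> / (1 - lam j \<omega>))
        \<le> lvl * max (\<Sum>j\<in>noncf E L t. R_ind P alpha j \<omega>) 1)"

definition rej_set :: "(nat \<Rightarrow> nat) \<Rightarrow> (nat \<Rightarrow> 'a \<Rightarrow> real) \<Rightarrow> (nat \<Rightarrow> 'a \<Rightarrow> real)
     \<Rightarrow> nat \<Rightarrow> 'a \<Rightarrow> nat set" where
  "rej_set E P alpha t \<omega> = {i. 1 \<le> i \<and> i \<le> t \<and> E i \<le> t \<and> P i \<omega> \<le> alpha i \<omega>}"

definition mFDR :: "'a measure \<Rightarrow> nat set \<Rightarrow> (nat \<Rightarrow> nat) \<Rightarrow> (nat \<Rightarrow> 'a \<Rightarrow> real)
     \<Rightarrow> (nat \<Rightarrow> 'a \<Rightarrow> real) \<Rightarrow> ('a \<Rightarrow> nat) \<Rightarrow> real" where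
  "mFDR M H0 E P alpha T =
     (\<integral>\<omega>. real (card (rej_set E P alpha (T \<omega>) \<omega> \<inter> H0)) \<partial>M) /
     (\<integral>\<omega>. max (real (card (rej_set E P alpha (T \<omega>) \<omega>))) 1 \<partial>M)"

end

theory Submission
  imports Defs
begin

(* Let A_t be the event {E_t <= T} that test t is decided by time T. By (C1) it lies in
   F^{-X^{E_t}}, and since the filtration is monotone (this is where L_{t+1} <= L_t + 1 enters),
   so do alpha_t and lambda_t. Conditional super-uniformity of a null p-value P_t therefore gives
   E[1_{A_t} R_t] <= E[1_{A_t} alpha_t] for LORD*, and, applied a second time at the level
   lambda_t, E[1_{A_t} R_t] <= E[1_{A_t} alpha_t / (1 - lambda_t) 1{P_t > lambda_t}] for SAFFRON*.
   Summing over the null tests decided by time T bounds E|V(T)| by the expectation of the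
   numerator of the procedure's estimate of the false discovery proportion at time T, and the
   level constraint bounds that numerator pointwise by alpha (|R(T)| v 1).
   Super-uniformity at a random F-measurable level is reduced to constant levels by rounding
   the level up to a finite grid. *)

lemma mem_noncf_iff: "i \<in> noncf E L t \<longleftrightarrow> 1 \<le> i \<and> i < t \<and> E i < t \<and> i + L t < t"
  unfolding noncf_def conflict_set_def
  by (simp only: mem_Collect_eq Un_iff Int_iff atLeastAtMost_iff) linarith

lemma conflict_set_subset: "conflict_set E L t \<subseteq> {1..<t}"
  unfolding conflict_set_def by auto

lemma finite_noncf: "finite (noncf E L t)"
  by (rule finite_subset[of _ "{1..<t}"]) (auto simp: mem_noncf_iff)

lemma finite_conflict_set: "finite (conflict_set E L t)"
  using conflict_set_subset by (rule finite_subset) simp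

lemma atLeastAtMost_subset_noncf_conflict_set:
  "{1..t} \<subseteq> noncf E L t \<union> (conflict_set E L t \<union> {t})"
  unfolding noncf_def by auto

lemma noncf_mono:
  assumes L_lag: "\<And>t. t \<ge> 1 \<Longrightarrow> L (Suc t) \<le> L t + 1" and "s \<le> t"
  shows "noncf E L s \<subseteq> noncf E L t"
proof
  fix i assume "i \<in> noncf E L s"
  then have i: "1 \<le> i" "i < s" "E i < s" "i + L s < s" by (auto simp: mem_noncf_iff)
  have "i + L (s + d) < s + d" for d
  proof (induction d)
    case 0
    then show ?case using i by simp
  next
    case (Suc d)
    then show ?case using L_lag[of "s + d"] i by simp
  qed
  from this[of "t - s"] show "i \<in> noncf E L t" using i \<open>s \<le> t\<close> by (simp add: mem_noncf_iff)
qed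

lemma sum_R_ind_noncf_le_card_rej_set:
  "(\<Sum>j\<in>noncf E L t. R_ind P alpha j \<omega>) \<le> real (card (rej_set E P alpha t \<omega>))"
proof -
  have "(\<Sum>j\<in>noncf E L t. R_ind P alpha j \<omega>) = real (card {j\<in>noncf E L t. P j \<omega> \<le> alpha j \<omega>})"
    by (simp add: R_ind_def sum.If_cases finite_noncf Int_def conj_commute)
  also have "\<dots> \<le> real (card (rej_set E P alpha t \<omega>))"
    by (intro of_nat_mono card_mono)
      (auto simp: rej_set_def mem_noncf_iff intro: finite_subset[of _ "{1..t}"])
  finally show ?thesis .
qed

lemma sum_R_ind_noncf_le: "(\<Sum>j\<in>noncf E L t. R_ind P alpha j \<omega>) \<le> real t"
proof -
  have "(\<Sum>j\<in>noncf E L t. R_ind P alpha j \<omega>) \<le> real (card (noncf E L t))"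
    using sum_bounded_above[of "noncf E L t" "\<lambda>j. R_ind P alpha j \<omega>" 1] by (simp add: R_ind_def)
  also have "card (noncf E L t) \<le> card {1..<t}"
    by (rule card_mono) (auto simp: mem_noncf_iff)
  finally show ?thesis by simp
qed

lemma space_gen_sigma [simp]: "space (gen_sigma M fs) = space M"
  unfolding gen_sigma_def by (rule space_measure_of) auto

lemma sets_gen_sigma:
  "sets (gen_sigma M fs) = sigma_sets (space M) (\<Union>f\<in>fs. {f -` A \<inter> space M | A. A \<in> sets borel})"
  unfolding gen_sigma_def by (rule sets_measure_of) auto

lemma subalgebra_gen_sigma_mono:
  assumes "fs \<subseteq> fs'"
  shows "subalgebra (gen_sigma M fs') (gen_sigma M fs)"
  unfolding subalgebra_def sets_gen_sigma
  by (simp add: sigma_sets_mono' UN_mono assms)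

lemma subalgebra_gen_sigma:
  assumes "\<And>f. f \<in> fs \<Longrightarrow> f \<in> borel_measurable M"
  shows "subalgebra M (gen_sigma M fs)"
  unfolding subalgebra_def sets_gen_sigma
  using assms by (auto intro!: sets.sigma_sets_subset measurable_sets)

lemma noncf_sigma_mono:
  assumes "\<And>t. t \<ge> 1 \<Longrightarrow> L (Suc t) \<le> L t + 1" and "s \<le> t"
  shows "subalgebra (noncf_sigma k M E L P alpha lam t) (noncf_sigma k M E L P alpha lam s)"
  using noncf_mono[of L, OF assms, of E]
  by (cases k) (auto simp: noncf_sigma_def intro!: subalgebra_gen_sigma_mono)

lemma subalgebra_noncf_sigma:
  assumes "\<And>i. i \<in> noncf E L t \<Longrightarrow> R_ind P alpha i \<in> borel_measurable M"
    and "\<And>i. k = SAFFRON_star \<Longrightarrow> i \<in> noncf E L t \<Longrightarrow> C_ind P lam i \<in> borel_measurable M"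
  shows "subalgebra M (noncf_sigma k M E L P alpha lam t)"
  using assms by (cases k) (auto simp: noncf_sigma_def intro!: subalgebra_gen_sigma)

lemma R_ind_measurable:
  "P i \<in> borel_measurable M \<Longrightarrow> alpha i \<in> borel_measurable M \<Longrightarrow> R_ind P alpha i \<in> borel_measurable M"
  unfolding R_ind_def[abs_def] by measurable

lemma C_ind_measurable:
  "P i \<in> borel_measurable M \<Longrightarrow> lam i \<in> borel_measurable M \<Longrightarrow> C_ind P lam i \<in> borel_measurable M"
  unfolding C_ind_def[abs_def] by measurable

definition grid :: "nat \<Rightarrow> real set" where
  "grid n = (\<lambda>j. real j / real n) ` {..n}"

definition grid_ceiling :: "nat \<Rightarrow> real \<Rightarrow> real" where
  "grid_ceiling n x = real (min n (nat \<lceil>real n * x\<rceil>)) / real n"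

lemma finite_grid: "finite (grid n)"
  by (simp add: grid_def)

lemma grid_subset: "grid n \<subseteq> {0..1}"
  by (cases "n = 0") (auto simp: grid_def divide_le_eq_1)

lemma grid_ceiling_mem: "grid_ceiling n x \<in> grid n"
  by (auto simp: grid_def grid_ceiling_def)

lemma grid_ceiling_bounds:
  assumes "n \<ge> 1" "0 \<le> x" "x \<le> 1"
  shows "x \<le> grid_ceiling n x \<and> grid_ceiling n x \<le> x + 1 / real n"
proof -
  have "0 \<le> real n * x" "real n * x \<le> real n"
    using assms by (simp_all add: mult_left_le)
  then have "0 \<le> \<lceil>real n * x\<rceil>" "nat \<lceil>real n * x\<rceil> \<le> n"
    by (simp_all add: nat_le_iff ceiling_le_iff)
  then have "real (min n (nat \<lceil>real n * x\<rceil>)) = of_int \<lceil>real n * x\<rceil>"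
    by (simp add: min_absorb2)
  then have "real n * x \<le> real n * grid_ceiling n x \<and> real n * grid_ceiling n x \<le> real n * x + 1"
    unfolding grid_ceiling_def using assms(1) by (simp add: ceiling_correct)
  then show ?thesis
    using assms(1) by (simp add: field_simps)
qed

lemma rejection_le_grid_ceiling:
  fixes g u p :: real
  assumes "0 \<le> g" "0 \<le> u" "n \<ge> 1"
  shows "g * (if p \<le> u then 1 else 0)
    \<le> (if u \<le> 1 then g else 0) * (if p \<le> grid_ceiling n u then 1 else 0) + (if u \<le> 1 then 0 else g)"
  using assms grid_ceiling_bounds[OF assms(3,2)] by auto

lemma weighted_grid_ceiling_le:
  fixes g u C :: real
  assumes "0 \<le> g" "g \<le> C" "0 \<le> u" "n \<ge> 1"
  shows "(if u \<le> 1 then g else 0) * grid_ceiling n u + (if u \<le> 1 then 0 else g) \<le> g * u + C / real n"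
proof (cases "u \<le> 1")
  case True
  then have "g * grid_ceiling n u \<le> g * (u + 1 / real n)"
    using grid_ceiling_bounds[OF assms(4,3)] assms(1) by (intro mult_left_mono) auto
  also have "\<dots> \<le> g * u + C / real n"
    using assms(2) by (simp add: distrib_left divide_right_mono)
  finally show ?thesis
    using True by simp
next
  case False
  then have "g \<le> g * u"
    using assms(1) by (simp add: mult_le_cancel_left1)
  moreover have "0 \<le> C / real n"
    using assms(1,2) by simp
  ultimately show ?thesis
    using False by simp
qed

definition cond_superuniform :: "'a measure \<Rightarrow> 'a measure \<Rightarrow> ('a \<Rightarrow> real) \<Rightarrow> bool" where
  "cond_superuniform M F p \<longleftrightarrow>
     (\<forall>u. 0 \<le> u \<longrightarrow> u \<le> 1 \<longrightarrow>
        (AE \<omega> in M. real_cond_exp M F (indicator {\<omega>\<in>space M. p \<omega> \<le> u}) \<omega> \<le> u))"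

context prob_space
begin

lemma integrable_bounded:
  fixes f :: "'a \<Rightarrow> real"
  assumes "f \<in> borel_measurable M" and "\<And>\<omega>. \<omega> \<in> space M \<Longrightarrow> \<bar>f \<omega>\<bar> \<le> B"
  shows "integrable M f"
  using assms by (intro integrable_const_bound[where B = B]) auto

lemma integrable_bounded_mult:
  fixes f w :: "'a \<Rightarrow> real"
  assumes "f \<in> borel_measurable M" "w \<in> borel_measurable M"
    and "\<And>\<omega>. \<omega> \<in> space M \<Longrightarrow> \<bar>f \<omega>\<bar> \<le> B" "\<And>\<omega>. \<omega> \<in> space M \<Longrightarrow> \<bar>w \<omega>\<bar> \<le> B'"
  shows "integrable M (\<lambda>\<omega>. f \<omega> * w \<omega>)"
proof (rule integrable_bounded[where B = "B * B'"])
  fix \<omega> assume "\<omega> \<in> space M"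
  with assms(3,4) show "\<bar>f \<omega> * w \<omega>\<bar> \<le> B * B'"
    unfolding abs_mult by (meson abs_ge_zero mult_mono order_trans)
qed (use assms(1,2) in measurable)

lemma upper_bound_nonneg:
  assumes "\<And>\<omega>. \<omega> \<in> space M \<Longrightarrow> 0 \<le> g \<omega> \<and> g \<omega> \<le> (C :: real)"
  shows "0 \<le> C"
proof -
  obtain \<omega> where "\<omega> \<in> space M"
    using not_empty by blast
  then show ?thesis
    using assms by force
qed

lemma integral_superuniform_const:
  assumes sub: "subalgebra M F" and p_meas [measurable]: "p \<in> borel_measurable M"
    and su: "cond_superuniform M F p" and v: "0 \<le> v" "v \<le> 1"
    and g_meas [measurable]: "g \<in> borel_measurable F"
    and g: "\<And>\<omega>. \<omega> \<in> space M \<Longrightarrow> 0 \<le> g \<omega> \<and> g \<omega> \<le> C"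
  shows "(\<integral>\<omega>. g \<omega> * (if p \<omega> \<le> v then 1 else 0) \<partial>M) \<le> (\<integral>\<omega>. g \<omega> * v \<partial>M)"
proof -
  interpret finite_measure_subalgebra M F
    by unfold_locales (use sub in \<open>simp add: subalgebra_def\<close>)
  let ?I = "indicator {\<omega>\<in>space M. p \<omega> \<le> v} :: 'a \<Rightarrow> real"
  have [measurable]: "g \<in> borel_measurable M"
    using measurable_from_subalg[OF sub g_meas] .
  have "0 \<le> C"
    using g by (rule upper_bound_nonneg)
  then have int: "integrable M (\<lambda>\<omega>. g \<omega> * ?I \<omega>)"
    by (intro integrable_bounded[where B = C]) (use g in \<open>auto simp: indicator_def\<close>)
  have "(\<integral>\<omega>. g \<omega> * (if p \<omega> \<le> v then 1 else 0) \<partial>M) = (\<integral>\<omega>. g \<omega> * ?I \<omega> \<partial>M)"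
    by (rule Bochner_Integration.integral_cong) (auto simp: indicator_def)
  also have "\<dots> = (\<integral>\<omega>. g \<omega> * real_cond_exp M F ?I \<omega> \<partial>M)"
    using real_cond_exp_intg(2)[OF int] by simp
  also have "\<dots> \<le> (\<integral>\<omega>. g \<omega> * v \<partial>M)"
  proof (rule integral_mono_AE)
    show "integrable M (\<lambda>\<omega>. g \<omega> * real_cond_exp M F ?I \<omega>)"
      using real_cond_exp_intg(1)[OF int] by simp
    show "integrable M (\<lambda>\<omega>. g \<omega> * v)"
      by (rule integrable_bounded[where B = "C * v"]) (use g v in \<open>auto intro: mult_right_mono\<close>)
    have "AE \<omega> in M. real_cond_exp M F ?I \<omega> \<le> v"
      using su v unfolding cond_superuniform_def by blast
    then show "AE \<omega> in M. g \<omega> * real_cond_exp M F ?I \<omega> \<le> g \<omega> * v"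
      using AE_space by eventually_elim (use g in \<open>auto intro: mult_left_mono\<close>)
  qed
  finally show ?thesis .
qed

lemma integral_superuniform_finite_range:
  assumes sub: "subalgebra M F" and p_meas [measurable]: "p \<in> borel_measurable M"
    and su: "cond_superuniform M F p"
    and [measurable]: "g \<in> borel_measurable F"
    and g: "\<And>\<omega>. \<omega> \<in> space M \<Longrightarrow> 0 \<le> g \<omega> \<and> g \<omega> \<le> C"
    and [measurable]: "u \<in> borel_measurable F" and u: "\<And>\<omega>. \<omega> \<in> space M \<Longrightarrow> u \<omega> \<in> V"
    and V: "finite V" "V \<subseteq> {0..1}"
  shows "(\<integral>\<omega>. g \<omega> * (if p \<omega> \<le> u \<omega> then 1 else 0) \<partial>M) \<le> (\<integral>\<omega>. g \<omega> * u \<omega> \<partial>M)"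
proof -
  define h where "h v \<omega> = (if u \<omega> = v then g \<omega> else 0)" for v \<omega>
  have h_F [measurable]: "h v \<in> borel_measurable F" for v
    unfolding h_def by measurable
  have [measurable]: "h v \<in> borel_measurable M" for v
    using measurable_from_subalg[OF sub h_F] .
  have h: "0 \<le> h v \<omega> \<and> h v \<omega> \<le> C" if "\<omega> \<in> space M" for v \<omega>
    using g[OF that] by (simp add: h_def)
  have sum_h: "(\<Sum>v\<in>V. h v \<omega> * f v) = g \<omega> * f (u \<omega>)" if "\<omega> \<in> space M" for \<omega> f
  proof -
    have "(\<Sum>v\<in>V. h v \<omega> * f v) = (\<Sum>v\<in>V. if v = u \<omega> then g \<omega> * f v else 0)"
      by (rule sum.cong) (auto simp: h_def)
    also have "\<dots> = g \<omega> * f (u \<omega>)"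
      using u[OF that] V(1) by simp
    finally show ?thesis .
  qed
  have int_h: "integrable M (\<lambda>\<omega>. h v \<omega> * f \<omega>)"
    if "f \<in> borel_measurable M" "\<And>\<omega>. \<omega> \<in> space M \<Longrightarrow> \<bar>f \<omega>\<bar> \<le> 1" for v f
    using h that by (intro integrable_bounded_mult[where B = C and B' = 1]) auto
  have "(\<integral>\<omega>. g \<omega> * (if p \<omega> \<le> u \<omega> then 1 else 0) \<partial>M)
      = (\<integral>\<omega>. (\<Sum>v\<in>V. h v \<omega> * (if p \<omega> \<le> v then 1 else 0)) \<partial>M)"
    by (rule Bochner_Integration.integral_cong) (simp_all add: sum_h)
  also have "\<dots> = (\<Sum>v\<in>V. \<integral>\<omega>. h v \<omega> * (if p \<omega> \<le> v then 1 else 0) \<partial>M)"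
    by (rule Bochner_Integration.integral_sum) (rule int_h; simp)
  also have "\<dots> \<le> (\<Sum>v\<in>V. \<integral>\<omega>. h v \<omega> * v \<partial>M)"
  proof (rule sum_mono)
    fix v assume "v \<in> V"
    then show "(\<integral>\<omega>. h v \<omega> * (if p \<omega> \<le> v then 1 else 0) \<partial>M) \<le> (\<integral>\<omega>. h v \<omega> * v \<partial>M)"
      using V by (intro integral_superuniform_const[OF sub p_meas su _ _ h_F h]) auto
  qed
  also have "\<dots> = (\<integral>\<omega>. (\<Sum>v\<in>V. h v \<omega> * v) \<partial>M)"
    using V by (intro Bochner_Integration.integral_sum[symmetric] int_h) auto
  also have "\<dots> = (\<integral>\<omega>. g \<omega> * u \<omega> \<partial>M)"
    by (rule Bochner_Integration.integral_cong) (simp_all add: sum_h)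
  finally show ?thesis .
qed

lemma integral_superuniform_approx:
  assumes sub: "subalgebra M F" and p_meas [measurable]: "p \<in> borel_measurable M"
    and su: "cond_superuniform M F p"
    and g_meas [measurable]: "g \<in> borel_measurable F"
    and g: "\<And>\<omega>. \<omega> \<in> space M \<Longrightarrow> 0 \<le> g \<omega> \<and> g \<omega> \<le> C"
    and u_meas [measurable]: "u \<in> borel_measurable F"
    and u: "\<And>\<omega>. \<omega> \<in> space M \<Longrightarrow> 0 \<le> u \<omega> \<and> u \<omega> \<le> D"
    and n: "n \<ge> 1"
  shows "(\<integral>\<omega>. g \<omega> * (if p \<omega> \<le> u \<omega> then 1 else 0) \<partial>M) \<le> (\<integral>\<omega>. g \<omega> * u \<omega> \<partial>M) + C / real n"
proof -
  \<comment> \<open>Where u \<le> 1, round u up to the grid; where u > 1, the rejection indicator is bounded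
    by 1 < u directly.\<close>
  define v where "v \<omega> = grid_ceiling n (u \<omega>)" for \<omega>
  define g1 where "g1 \<omega> = (if u \<omega> \<le> 1 then g \<omega> else 0)" for \<omega>
  define g2 where "g2 \<omega> = (if u \<omega> \<le> 1 then 0 else g \<omega>)" for \<omega>
  have [measurable]: "v \<in> borel_measurable F" "g1 \<in> borel_measurable F"
    unfolding v_def grid_ceiling_def g1_def by measurable
  have [measurable]: "g \<in> borel_measurable M" "u \<in> borel_measurable M"
    using measurable_from_subalg[OF sub g_meas] measurable_from_subalg[OF sub u_meas] .
  have [measurable]: "v \<in> borel_measurable M" "g1 \<in> borel_measurable M" "g2 \<in> borel_measurable M"
    unfolding v_def grid_ceiling_def g1_def g2_def by measurable
  have C: "0 \<le> C"
    using g by (rule upper_bound_nonneg)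
  have v_grid: "v \<omega> \<in> grid n" and v_unit: "0 \<le> v \<omega> \<and> v \<omega> \<le> 1" for \<omega>
    using grid_ceiling_mem[of n "u \<omega>"] grid_subset[of n] unfolding v_def by auto
  have g12: "0 \<le> g1 \<omega> \<and> g1 \<omega> \<le> C" "0 \<le> g2 \<omega> \<and> g2 \<omega> \<le> C" if "\<omega> \<in> space M" for \<omega>
    using g[OF that] by (auto simp: g1_def g2_def)
  have int: "integrable M (\<lambda>\<omega>. f \<omega> * w \<omega>)"
    if "f \<in> {g, g1, g2}" "w \<in> borel_measurable M" "\<And>\<omega>. \<omega> \<in> space M \<Longrightarrow> \<bar>w \<omega>\<bar> \<le> D'" for f w D'
    using that g g12 by (intro integrable_bounded_mult[where B = C and B' = D']) auto
  have pointwise_lower: "g \<omega> * (if p \<omega> \<le> u \<omega> then 1 else 0) \<le> g1 \<omega> * (if p \<omega> \<le> v \<omega> then 1 else 0) + g2 \<omega>"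
    and pointwise_upper: "g1 \<omega> * v \<omega> + g2 \<omega> \<le> g \<omega> * u \<omega> + C / real n" if "\<omega> \<in> space M" for \<omega>
    unfolding g1_def g2_def v_def using g[OF that] u[OF that]
    by (simp_all add: rejection_le_grid_ceiling[OF _ _ n] weighted_grid_ceiling_le[OF _ _ _ n])
  have int_rejection: "integrable M (\<lambda>\<omega>. f \<omega> * (if p \<omega> \<le> w \<omega> then 1 else 0))"
    if "f \<in> {g, g1}" "w \<in> borel_measurable M" for f w
    using that int[of f _ 1] by auto
  have int_g2: "integrable M g2"
    using int[of g2 "\<lambda>_. 1" 1] by simp
  have "(\<integral>\<omega>. g \<omega> * (if p \<omega> \<le> u \<omega> then 1 else 0) \<partial>M)
      \<le> (\<integral>\<omega>. g1 \<omega> * (if p \<omega> \<le> v \<omega> then 1 else 0) + g2 \<omega> \<partial>M)"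
    using pointwise_lower int_rejection int_g2 by (intro integral_mono) auto
  also have "\<dots> = (\<integral>\<omega>. g1 \<omega> * (if p \<omega> \<le> v \<omega> then 1 else 0) \<partial>M) + (\<integral>\<omega>. g2 \<omega> \<partial>M)"
    using int_rejection int_g2 by (intro Bochner_Integration.integral_add) auto
  also have "\<dots> \<le> (\<integral>\<omega>. g1 \<omega> * v \<omega> \<partial>M) + (\<integral>\<omega>. g2 \<omega> \<partial>M)"
    using g12(1) finite_grid grid_subset[of n]
    by (intro add_right_mono integral_superuniform_finite_range[OF sub p_meas su _ _ _ v_grid]) auto
  also have "\<dots> = (\<integral>\<omega>. g1 \<omega> * v \<omega> + g2 \<omega> \<partial>M)"
    using int[of g1 v 1] v_unit int_g2 by (intro Bochner_Integration.integral_add[symmetric]) auto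
  also have "\<dots> \<le> (\<integral>\<omega>. g \<omega> * u \<omega> + C / real n \<partial>M)"
    using pointwise_upper int[of g1 v 1] v_unit int_g2 int[of g u D] u by (intro integral_mono) auto
  also have "\<dots> = (\<integral>\<omega>. g \<omega> * u \<omega> \<partial>M) + C / real n"
    using int[of g u D] u by (simp add: prob_space)
  finally show ?thesis .
qed

lemma integral_superuniform:
  assumes "subalgebra M F" "p \<in> borel_measurable M" "cond_superuniform M F p"
    and "g \<in> borel_measurable F" "\<And>\<omega>. \<omega> \<in> space M \<Longrightarrow> 0 \<le> g \<omega> \<and> g \<omega> \<le> C"
    and "u \<in> borel_measurable F" "\<And>\<omega>. \<omega> \<in> space M \<Longrightarrow> 0 \<le> u \<omega> \<and> u \<omega> \<le> D"
  shows "(\<integral>\<omega>. g \<omega> * (if p \<omega> \<le> u \<omega> then 1 else 0) \<partial>M) \<le> (\<integral>\<omega>. g \<omega> * u \<omega> \<partial>M)"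
proof -
  have "(\<lambda>n. (\<integral>\<omega>. g \<omega> * u \<omega> \<partial>M) + C / real n) \<longlonglongrightarrow> (\<integral>\<omega>. g \<omega> * u \<omega> \<partial>M)"
    using tendsto_add[OF tendsto_const lim_const_over_n] by simp
  then show ?thesis
    by (rule LIMSEQ_le_const) (use integral_superuniform_approx[OF assms] in blast)
qed

lemma integral_superuniform_candidacy:
  assumes sub: "subalgebra M F" and p_meas [measurable]: "p \<in> borel_measurable M"
    and su: "cond_superuniform M F p"
    and g_meas [measurable]: "g \<in> borel_measurable F"
    and g: "\<And>\<omega>. \<omega> \<in> space M \<Longrightarrow> 0 \<le> g \<omega> \<and> g \<omega> \<le> C"
    and a_meas [measurable]: "a \<in> borel_measurable F" and l_meas [measurable]: "l \<in> borel_measurable F"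
    and al: "\<And>\<omega>. \<omega> \<in> space M \<Longrightarrow> 0 \<le> a \<omega> \<and> a \<omega> \<le> l \<omega> \<and> l \<omega> < 1"
    and ratio: "\<And>\<omega>. \<omega> \<in> space M \<Longrightarrow> a \<omega> / (1 - l \<omega>) \<le> D"
  shows "(\<integral>\<omega>. g \<omega> * (if p \<omega> \<le> a \<omega> then 1 else 0) \<partial>M)
    \<le> (\<integral>\<omega>. g \<omega> * (a \<omega> / (1 - l \<omega>) * (if p \<omega> > l \<omega> then 1 else 0)) \<partial>M)"
proof -
  have a_unit: "0 \<le> a \<omega> \<and> a \<omega> \<le> 1" and l_unit: "0 \<le> l \<omega> \<and> l \<omega> \<le> 1"
    if "\<omega> \<in> space M" for \<omega>
    using al[OF that] by auto
  \<comment> \<open>Super-uniformity at the candidacy level l, applied to the weight h, gives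
    E[h 1{p \<le> l}] \<le> E[h l]; and g a = h (1 - l).\<close>
  define h where "h \<omega> = g \<omega> * (a \<omega> / (1 - l \<omega>))" for \<omega>
  have h_meas [measurable]: "h \<in> borel_measurable F"
    unfolding h_def by measurable
  have [measurable]: "h \<in> borel_measurable M" "l \<in> borel_measurable M"
    using measurable_from_subalg[OF sub h_meas] measurable_from_subalg[OF sub l_meas] .
  have h: "0 \<le> h \<omega> \<and> h \<omega> \<le> C * D" if "\<omega> \<in> space M" for \<omega>
  proof -
    have "0 \<le> a \<omega> / (1 - l \<omega>)"
      using al[OF that] by simp
    then show ?thesis
      using g[OF that] ratio[OF that] mult_mono[of "g \<omega>" C "a \<omega> / (1 - l \<omega>)" D]
      unfolding h_def by (simp del: times_divide_eq_right)
  qed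
  have int_h: "integrable M (\<lambda>\<omega>. h \<omega> * w \<omega>)"
    if "w \<in> borel_measurable M" "\<And>\<omega>. \<omega> \<in> space M \<Longrightarrow> \<bar>w \<omega>\<bar> \<le> 1" for w
    using h that by (intro integrable_bounded_mult[where B = "C * D" and B' = 1]) auto
  have "(\<integral>\<omega>. g \<omega> * (if p \<omega> \<le> a \<omega> then 1 else 0) \<partial>M) \<le> (\<integral>\<omega>. g \<omega> * a \<omega> \<partial>M)"
    by (rule integral_superuniform[OF sub p_meas su g_meas g a_meas a_unit])
  also have "\<dots> = (\<integral>\<omega>. h \<omega> - h \<omega> * l \<omega> \<partial>M)"
  proof (rule Bochner_Integration.integral_cong)
    fix \<omega> assume "\<omega> \<in> space M"
    then have "1 - l \<omega> \<noteq> 0"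
      using al by force
    have "h \<omega> - h \<omega> * l \<omega> = h \<omega> * (1 - l \<omega>)"
      by (simp add: algebra_simps)
    also have "\<dots> = g \<omega> * a \<omega>"
      using \<open>1 - l \<omega> \<noteq> 0\<close> by (simp add: h_def)
    finally show "g \<omega> * a \<omega> = h \<omega> - h \<omega> * l \<omega>"
      by simp
  qed simp
  also have "\<dots> = (\<integral>\<omega>. h \<omega> \<partial>M) - (\<integral>\<omega>. h \<omega> * l \<omega> \<partial>M)"
    using int_h[of "\<lambda>_. 1"] int_h[of l] l_unit by (intro Bochner_Integration.integral_diff) auto
  also have "\<dots> \<le> (\<integral>\<omega>. h \<omega> \<partial>M) - (\<integral>\<omega>. h \<omega> * (if p \<omega> \<le> l \<omega> then 1 else 0) \<partial>M)"
    by (intro diff_left_mono integral_superuniform[OF sub p_meas su h_meas h l_meas l_unit])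
  also have "\<dots> = (\<integral>\<omega>. h \<omega> - h \<omega> * (if p \<omega> \<le> l \<omega> then 1 else 0) \<partial>M)"
    using int_h[of "\<lambda>_. 1"] int_h[of "\<lambda>\<omega>. if p \<omega> \<le> l \<omega> then 1 else 0"]
    by (intro Bochner_Integration.integral_diff[symmetric]) auto
  also have "\<dots> = (\<integral>\<omega>. g \<omega> * (a \<omega> / (1 - l \<omega>) * (if p \<omega> > l \<omega> then 1 else 0)) \<partial>M)"
    by (intro Bochner_Integration.integral_cong) (auto simp: h_def)
  finally show ?thesis .
qed

end

lemma card_false_rejections_le_sum:
  assumes "\<tau> \<le> B"
  shows "real (card (rej_set E P alpha \<tau> \<omega> \<inter> H0))
    \<le> (\<Sum>t\<in>{t\<in>H0. 1 \<le> t \<and> t \<le> B}. (if E t \<le> \<tau> then 1 else 0) * R_ind P alpha t \<omega>)"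
proof -
  let ?S = "{t\<in>H0. 1 \<le> t \<and> t \<le> B}"
  have fin: "finite ?S"
    by (rule finite_subset[of _ "{1..B}"]) auto
  have "card (rej_set E P alpha \<tau> \<omega> \<inter> H0) \<le> card {t\<in>?S. E t \<le> \<tau> \<and> P t \<omega> \<le> alpha t \<omega>}"
    using assms fin by (intro card_mono) (auto simp: rej_set_def)
  also have "real \<dots> = (\<Sum>t\<in>{t\<in>?S. E t \<le> \<tau> \<and> P t \<omega> \<le> alpha t \<omega>}. 1)"
    by simp
  also have "\<dots> = (\<Sum>t\<in>?S. if E t \<le> \<tau> \<and> P t \<omega> \<le> alpha t \<omega> then 1 else 0)"
    by (rule sum.inter_filter[OF fin])
  also have "\<dots> = (\<Sum>t\<in>?S. (if E t \<le> \<tau> then 1 else 0) * R_ind P alpha t \<omega>)"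
    by (rule sum.cong) (auto simp: R_ind_def)
  finally show ?thesis
    by simp
qed

locale online_procedure = prob_space M
  for M :: "'a measure" and E L :: "nat \<Rightarrow> nat" and lvl :: real
    and P alpha lam :: "nat \<Rightarrow> 'a \<Rightarrow> real" and k :: proc_kind +
  assumes P_meas: "\<And>t. t \<ge> 1 \<Longrightarrow> P t \<in> borel_measurable M"
    and E_ge: "\<And>t. t \<ge> 1 \<Longrightarrow> E t \<ge> t"
    and L_lag: "\<And>t. t \<ge> 1 \<Longrightarrow> L (Suc t) \<le> L t + 1"
    and procedure: "(k = LORD_star \<and> is_LORD_star M E L lvl P alpha)
      \<or> (k = SAFFRON_star \<and> is_SAFFRON_star M E L lvl P alpha lam)"
begin

abbreviation F :: "nat \<Rightarrow> 'a measure" where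
  "F \<equiv> noncf_sigma k M E L P alpha lam"

lemma F_mono: "s \<le> t \<Longrightarrow> subalgebra (F t) (F s)"
  by (rule noncf_sigma_mono[of L, OF L_lag])

lemma alpha_F_measurable: "t \<ge> 1 \<Longrightarrow> alpha t \<in> borel_measurable (F t)"
  using procedure by (cases k) (auto simp: is_LORD_star_def is_SAFFRON_star_def noncf_sigma_def)

lemma lam_F_measurable: "k = SAFFRON_star \<Longrightarrow> t \<ge> 1 \<Longrightarrow> lam t \<in> borel_measurable (F t)"
  using procedure by (auto simp: is_SAFFRON_star_def)

lemma alpha_lam_measurable:
  "t \<ge> 1 \<Longrightarrow> alpha t \<in> borel_measurable M \<and> (k = SAFFRON_star \<longrightarrow> lam t \<in> borel_measurable M)"
proof (induction t rule: less_induct)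
  case (less t)
  have "subalgebra M (F t)"
    using less.IH P_meas
    by (intro subalgebra_noncf_sigma) (auto simp: mem_noncf_iff intro!: R_ind_measurable C_ind_measurable)
  then show ?case
    using alpha_F_measurable lam_F_measurable less.prems measurable_from_subalg by blast
qed

lemma subalgebra_F: "subalgebra M (F t)"
  using alpha_lam_measurable P_meas
  by (intro subalgebra_noncf_sigma) (auto simp: mem_noncf_iff intro!: R_ind_measurable C_ind_measurable)

lemma LORD_budget:
  "k = LORD_star \<Longrightarrow> t \<ge> 1 \<Longrightarrow> \<omega> \<in> space M \<Longrightarrow> 0 \<le> alpha t \<omega> \<and>
    (\<Sum>j\<in>{1..t}. alpha j \<omega>) \<le> lvl * max (\<Sum>j\<in>noncf E L t. R_ind P alpha j \<omega>) 1"
  using procedure by (auto simp: is_LORD_star_def)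

lemma SAFFRON_budget:
  "k = SAFFRON_star \<Longrightarrow> t \<ge> 1 \<Longrightarrow> \<omega> \<in> space M \<Longrightarrow>
    0 \<le> alpha t \<omega> \<and> alpha t \<omega> \<le> lam t \<omega> \<and> lam t \<omega> < 1 \<and>
    (\<Sum>j\<in>noncf E L t. alpha j \<omega> / (1 - lam j \<omega>) * (if P j \<omega> > lam j \<omega> then 1 else 0))
    + (\<Sum>j\<in>conflict_set E L t \<union> {t}. alpha j \<omega> / (1 - lam j \<omega>))
    \<le> lvl * max (\<Sum>j\<in>noncf E L t. R_ind P alpha j \<omega>) 1"
  using procedure by (auto simp: is_SAFFRON_star_def)

lemma SAFFRON_cost_nonneg:
  assumes "k = SAFFRON_star" "t \<ge> 1" "\<omega> \<in> space M"
  shows "0 \<le> alpha t \<omega> / (1 - lam t \<omega>)"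
  using SAFFRON_budget[OF assms] by simp

text \<open>Summand of the numerator of the procedure's estimate of the false discovery proportion.\<close>

definition fdp_term :: "nat \<Rightarrow> 'a \<Rightarrow> real" where
  "fdp_term t \<omega> = (case k of
      LORD_star \<Rightarrow> alpha t \<omega>
    | SAFFRON_star \<Rightarrow> alpha t \<omega> / (1 - lam t \<omega>) * (if P t \<omega> > lam t \<omega> then 1 else 0))"

lemma fdp_term_measurable:
  assumes "t \<ge> 1"
  shows "fdp_term t \<in> borel_measurable M"
proof (cases k)
  case LORD_star
  then show ?thesis
    using alpha_lam_measurable[OF assms] unfolding fdp_term_def[abs_def] by simp
next
  case SAFFRON_star
  then have [measurable]: "alpha t \<in> borel_measurable M" "lam t \<in> borel_measurable M"
    using alpha_lam_measurable[OF assms] by auto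
  have [measurable]: "P t \<in> borel_measurable M"
    using P_meas[OF assms] .
  show ?thesis
    unfolding fdp_term_def[abs_def] by (simp only: SAFFRON_star proc_kind.case) measurable
qed

lemma fdp_term_nonneg: "t \<ge> 1 \<Longrightarrow> \<omega> \<in> space M \<Longrightarrow> 0 \<le> fdp_term t \<omega>"
  using LORD_budget SAFFRON_cost_nonneg unfolding fdp_term_def by (cases k) auto

lemma sum_fdp_term_le:
  assumes "\<tau> \<ge> 1" and \<omega>: "\<omega> \<in> space M"
  shows "(\<Sum>t\<in>{1..\<tau>}. fdp_term t \<omega>) \<le> lvl * max (\<Sum>j\<in>noncf E L \<tau>. R_ind P alpha j \<omega>) 1"
proof (cases k)
  case LORD_star
  then show ?thesis
    using LORD_budget[OF LORD_star assms] unfolding fdp_term_def by simp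
next
  case SAFFRON_star
  let ?N = "noncf E L \<tau>" and ?X = "conflict_set E L \<tau> \<union> {\<tau>}"
  let ?cost = "\<lambda>t. alpha t \<omega> / (1 - lam t \<omega>)"
  have pos: "t \<ge> 1" if "t \<in> ?N \<union> ?X" for t
    using that conflict_set_subset assms(1) by (force simp: mem_noncf_iff)
  have fin: "finite ?N" "finite ?X"
    by (simp_all add: finite_noncf finite_conflict_set)
  have "(\<Sum>t\<in>{1..\<tau>}. fdp_term t \<omega>) \<le> (\<Sum>t\<in>?N \<union> ?X. fdp_term t \<omega>)"
    using fin atLeastAtMost_subset_noncf_conflict_set pos fdp_term_nonneg[OF _ \<omega>]
    by (intro sum_mono2) auto
  also have "\<dots> = (\<Sum>t\<in>?N. fdp_term t \<omega>) + (\<Sum>t\<in>?X. fdp_term t \<omega>)"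
    using fin by (intro sum.union_disjoint) (auto simp: noncf_def)
  also have "(\<Sum>t\<in>?X. fdp_term t \<omega>) \<le> (\<Sum>t\<in>?X. ?cost t)"
    using SAFFRON_cost_nonneg[OF SAFFRON_star _ \<omega>] pos
    unfolding fdp_term_def by (intro sum_mono) (auto simp: SAFFRON_star)
  also have "(\<Sum>t\<in>?N. fdp_term t \<omega>) + (\<Sum>t\<in>?X. ?cost t)
      \<le> lvl * max (\<Sum>j\<in>noncf E L \<tau>. R_ind P alpha j \<omega>) 1"
    using SAFFRON_budget[OF SAFFRON_star assms] unfolding fdp_term_def by (simp add: SAFFRON_star)
  finally show ?thesis
    by simp
qed

lemma lvl_nonneg: "0 \<le> lvl"
proof -
  obtain \<omega> where \<omega>: "\<omega> \<in> space M"
    using not_empty by blast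
  have "0 \<le> lvl * max (\<Sum>j\<in>noncf E L 1. R_ind P alpha j \<omega>) 1"
    using sum_fdp_term_le[of 1, OF _ \<omega>] fdp_term_nonneg[of 1, OF _ \<omega>] by simp
  then show ?thesis
    by (simp add: zero_le_mult_iff)
qed

lemma budget_le_lvl_times: "t \<ge> 1 \<Longrightarrow> lvl * max (\<Sum>j\<in>noncf E L t. R_ind P alpha j \<omega>) 1 \<le> lvl * real t"
  using sum_R_ind_noncf_le lvl_nonneg by (intro mult_left_mono) auto

lemma fdp_term_le:
  assumes "t \<ge> 1" "\<omega> \<in> space M"
  shows "fdp_term t \<omega> \<le> lvl * real t"
proof -
  have "fdp_term t \<omega> \<le> (\<Sum>j\<in>{1..t}. fdp_term j \<omega>)"
    using assms fdp_term_nonneg by (intro member_le_sum) auto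
  also have "\<dots> \<le> lvl * real t"
    using sum_fdp_term_le[OF assms] budget_le_lvl_times[OF assms(1), where \<omega> = \<omega>] by linarith
  finally show ?thesis .
qed

lemma SAFFRON_cost_le:
  assumes "k = SAFFRON_star" "t \<ge> 1" "\<omega> \<in> space M"
  shows "alpha t \<omega> / (1 - lam t \<omega>) \<le> lvl * real t"
proof -
  have "alpha t \<omega> / (1 - lam t \<omega>) \<le> (\<Sum>j\<in>conflict_set E L t \<union> {t}. alpha j \<omega> / (1 - lam j \<omega>))"
  proof (rule member_le_sum)
    fix j assume "j \<in> conflict_set E L t \<union> {t} - {t}"
    then have "j \<ge> 1"
      by (auto simp: conflict_set_def)
    then show "0 \<le> alpha j \<omega> / (1 - lam j \<omega>)"
      using SAFFRON_cost_nonneg assms(1,3) by blast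
  qed (simp_all add: finite_conflict_set)
  moreover have "0 \<le> (\<Sum>j\<in>noncf E L t. alpha j \<omega> / (1 - lam j \<omega>) * (if P j \<omega> > lam j \<omega> then 1 else 0))"
    using assms SAFFRON_cost_nonneg by (intro sum_nonneg) (auto simp: mem_noncf_iff)
  ultimately show ?thesis
    using SAFFRON_budget[OF assms] budget_le_lvl_times[OF assms(2), where \<omega> = \<omega>] by linarith
qed

lemma integrable_indicator_R_ind:
  assumes [measurable]: "A \<in> sets M" and t: "t \<ge> 1"
  shows "integrable M (\<lambda>\<omega>. indicator A \<omega> * R_ind P alpha t \<omega>)"
proof (rule integrable_bounded_mult[where B = 1 and B' = 1])
  show "R_ind P alpha t \<in> borel_measurable M"
    using alpha_lam_measurable[OF t] P_meas[OF t] by (intro R_ind_measurable) auto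
qed (auto simp: R_ind_def)

lemma integrable_indicator_fdp_term:
  assumes [measurable]: "A \<in> sets M" and t: "t \<ge> 1"
  shows "integrable M (\<lambda>\<omega>. indicator A \<omega> * fdp_term t \<omega>)"
  using fdp_term_measurable[OF t] fdp_term_nonneg[OF t] fdp_term_le[OF t]
  by (intro integrable_bounded_mult[where B = 1 and B' = "lvl * real t"]) auto

lemma integral_rejection_le_fdp_term:
  assumes t: "t \<ge> 1" and su: "cond_superuniform M (F (E t)) (P t)" and A: "A \<in> sets (F (E t))"
  shows "(\<integral>\<omega>. indicator A \<omega> * R_ind P alpha t \<omega> \<partial>M) \<le> (\<integral>\<omega>. indicator A \<omega> * fdp_term t \<omega> \<partial>M)"
proof -
  have later: "subalgebra (F (E t)) (F t)"
    using F_mono E_ge[OF t] .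
  have ind_meas: "indicator A \<in> borel_measurable (F (E t))"
    using A by simp
  have ind: "0 \<le> (indicator A \<omega> :: real) \<and> indicator A \<omega> \<le> (1::real)" for \<omega>
    by (simp add: indicator_def)
  have alpha_meas: "alpha t \<in> borel_measurable (F (E t))"
    using measurable_from_subalg[OF later alpha_F_measurable[OF t]] .
  note superuniform = subalgebra_F P_meas[OF t] su ind_meas ind alpha_meas
  show ?thesis
  proof (cases k)
    case LORD_star
    have "0 \<le> alpha t \<omega> \<and> alpha t \<omega> \<le> lvl * real t" if "\<omega> \<in> space M" for \<omega>
      using LORD_budget[OF LORD_star t that] fdp_term_le[OF t that] unfolding fdp_term_def
      by (simp add: LORD_star)
    from integral_superuniform[OF superuniform this] show ?thesis
      unfolding fdp_term_def R_ind_def by (simp add: LORD_star)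
  next
    case SAFFRON_star
    have "lam t \<in> borel_measurable (F (E t))"
      using measurable_from_subalg[OF later lam_F_measurable[OF SAFFRON_star t]] .
    moreover have "0 \<le> alpha t \<omega> \<and> alpha t \<omega> \<le> lam t \<omega> \<and> lam t \<omega> < 1" if "\<omega> \<in> space M" for \<omega>
      using SAFFRON_budget[OF SAFFRON_star t that] by blast
    ultimately have "(\<integral>\<omega>. indicator A \<omega> * (if P t \<omega> \<le> alpha t \<omega> then 1 else 0) \<partial>M)
      \<le> (\<integral>\<omega>. indicator A \<omega> * (alpha t \<omega> / (1 - lam t \<omega>) * (if P t \<omega> > lam t \<omega> then 1 else 0)) \<partial>M)"
      using SAFFRON_cost_le[OF SAFFRON_star t] by (rule integral_superuniform_candidacy[OF superuniform])
    then
    show ?thesis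
      unfolding fdp_term_def R_ind_def by (simp add: SAFFRON_star)
  qed
qed

lemma sets_F_stopping_time_ge:
  assumes T_pos: "\<And>\<omega>. \<omega> \<in> space M \<Longrightarrow> T \<omega> \<ge> 1"
    and T_F: "\<And>t. t \<ge> 1 \<Longrightarrow> {\<omega>\<in>space M. T \<omega> = t} \<in> sets (F (t + 1))"
  shows "{\<omega>\<in>space M. s \<le> T \<omega>} \<in> sets (F s)"
proof -
  have "{\<omega>\<in>space M. s \<le> T \<omega>} = space (F s) - (\<Union>r\<in>{1..<s}. {\<omega>\<in>space M. T \<omega> = r})"
    using T_pos subalgebra_F by (force simp: subalgebra_def)
  moreover have "{\<omega>\<in>space M. T \<omega> = r} \<in> sets (F s)" if "r \<in> {1..<s}" for r
    using T_F[of r] F_mono[of "r + 1" s] that by (auto simp: subalgebra_def)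
  ultimately show ?thesis
    by auto
qed

lemma sum_decided_fdp_terms_le:
  assumes S: "finite S" "\<And>t. t \<in> S \<Longrightarrow> t \<ge> 1" and \<tau>: "\<tau> \<ge> 1" and \<omega>: "\<omega> \<in> space M"
  shows "(\<Sum>t\<in>S. (if E t \<le> \<tau> then 1 else 0) * fdp_term t \<omega>)
    \<le> lvl * max (real (card (rej_set E P alpha \<tau> \<omega>))) 1"
proof -
  have "(\<Sum>t\<in>S. (if E t \<le> \<tau> then 1 else 0) * fdp_term t \<omega>) = (\<Sum>t\<in>S. if E t \<le> \<tau> then fdp_term t \<omega> else 0)"
    by (rule sum.cong) auto
  also have "\<dots> = (\<Sum>t\<in>{t\<in>S. E t \<le> \<tau>}. fdp_term t \<omega>)"
    by (rule sum.inter_filter[OF S(1), symmetric])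
  also have "\<dots> \<le> (\<Sum>t\<in>{1..\<tau>}. fdp_term t \<omega>)"
    using S E_ge fdp_term_nonneg[OF _ \<omega>] by (intro sum_mono2) force+
  also have "\<dots> \<le> lvl * max (\<Sum>j\<in>noncf E L \<tau>. R_ind P alpha j \<omega>) 1"
    using sum_fdp_term_le[OF \<tau> \<omega>] .
  also have "\<dots> \<le> lvl * max (real (card (rej_set E P alpha \<tau> \<omega>))) 1"
    using sum_R_ind_noncf_le_card_rej_set lvl_nonneg by (intro mult_left_mono max.mono) auto
  finally show ?thesis .
qed

lemma expected_false_rejections_le:
  assumes superunif: "\<And>t. t \<in> H0 \<Longrightarrow> t \<ge> 1 \<Longrightarrow> cond_superuniform M (F (E t)) (P t)"
    and T_pos: "\<And>\<omega>. \<omega> \<in> space M \<Longrightarrow> T \<omega> \<ge> 1"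
    and T_F: "\<And>t. t \<ge> 1 \<Longrightarrow> {\<omega>\<in>space M. T \<omega> = t} \<in> sets (F (t + 1))"
    and T_bounded: "AE \<omega> in M. T \<omega> \<le> B"
    and int: "integrable M (\<lambda>\<omega>. max (real (card (rej_set E P alpha (T \<omega>) \<omega>))) 1)"
  shows "(\<integral>\<omega>. real (card (rej_set E P alpha (T \<omega>) \<omega> \<inter> H0)) \<partial>M)
    \<le> lvl * (\<integral>\<omega>. max (real (card (rej_set E P alpha (T \<omega>) \<omega>))) 1 \<partial>M)"
proof -
  define S where "S = {t\<in>H0. 1 \<le> t \<and> t \<le> B}"
  define A where "A t = {\<omega>\<in>space M. E t \<le> T \<omega>}" for t
  have S: "finite S" "\<And>t. t \<in> S \<Longrightarrow> t \<ge> 1"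
    unfolding S_def by (auto intro: finite_subset[of _ "{1..B}"])
  have A_F: "A t \<in> sets (F (E t))" for t
    unfolding A_def using T_pos T_F by (rule sets_F_stopping_time_ge)
  have [measurable]: "A t \<in> sets M" for t
    using A_F subalgebra_F by (auto simp: subalgebra_def)
  have indicator_A: "indicator (A t) \<omega> = (if E t \<le> T \<omega> then 1 else 0)" if "\<omega> \<in> space M" for t \<omega>
    using that by (simp add: A_def)
  have int_R: "integrable M (\<lambda>\<omega>. indicator (A t) \<omega> * R_ind P alpha t \<omega>)"
    and int_fdp: "integrable M (\<lambda>\<omega>. indicator (A t) \<omega> * fdp_term t \<omega>)" if "t \<in> S" for t
    using S(2)[OF that] by (simp_all add: integrable_indicator_R_ind integrable_indicator_fdp_term)
  have count: "real (card (rej_set E P alpha (T \<omega>) \<omega> \<inter> H0))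
      \<le> (\<Sum>t\<in>S. indicator (A t) \<omega> * R_ind P alpha t \<omega>)" if "\<omega> \<in> space M" "T \<omega> \<le> B" for \<omega>
    using card_false_rejections_le_sum[of "T \<omega>" B E P alpha \<omega> H0, OF that(2)] that(1)
    by (simp add: S_def indicator_A)
  have budget: "(\<Sum>t\<in>S. indicator (A t) \<omega> * fdp_term t \<omega>)
      \<le> lvl * max (real (card (rej_set E P alpha (T \<omega>) \<omega>))) 1" if "\<omega> \<in> space M" for \<omega>
    using sum_decided_fdp_terms_le[OF S T_pos that] that by (simp add: indicator_A)
  have "(\<integral>\<omega>. real (card (rej_set E P alpha (T \<omega>) \<omega> \<inter> H0)) \<partial>M)
      \<le> (\<integral>\<omega>. (\<Sum>t\<in>S. indicator (A t) \<omega> * R_ind P alpha t \<omega>) \<partial>M)"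
  proof (rule integral_mono_AE')
    show "AE \<omega> in M. real (card (rej_set E P alpha (T \<omega>) \<omega> \<inter> H0))
        \<le> (\<Sum>t\<in>S. indicator (A t) \<omega> * R_ind P alpha t \<omega>)"
      using T_bounded AE_space by eventually_elim (rule count)
    show "AE \<omega> in M. 0 \<le> (\<Sum>t\<in>S. indicator (A t) \<omega> * R_ind P alpha t \<omega>)"
      by (intro AE_I2 sum_nonneg) (simp add: R_ind_def)
  qed (use int_R in simp)
  also have "\<dots> = (\<Sum>t\<in>S. \<integral>\<omega>. indicator (A t) \<omega> * R_ind P alpha t \<omega> \<partial>M)"
    using int_R by (rule Bochner_Integration.integral_sum)
  also have "\<dots> \<le> (\<Sum>t\<in>S. \<integral>\<omega>. indicator (A t) \<omega> * fdp_term t \<omega> \<partial>M)"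
    using S(2) superunif A_F by (intro sum_mono integral_rejection_le_fdp_term) (auto simp: S_def)
  also have "\<dots> = (\<integral>\<omega>. (\<Sum>t\<in>S. indicator (A t) \<omega> * fdp_term t \<omega>) \<partial>M)"
    using int_fdp by (rule Bochner_Integration.integral_sum[symmetric])
  also have "\<dots> \<le> (\<integral>\<omega>. lvl * max (real (card (rej_set E P alpha (T \<omega>) \<omega>))) 1 \<partial>M)"
    using budget int_fdp int by (intro integral_mono) auto
  finally show ?thesis
    by simp
qed

lemma mFDR_le:
  assumes "\<And>t. t \<in> H0 \<Longrightarrow> t \<ge> 1 \<Longrightarrow> cond_superuniform M (F (E t)) (P t)"
    and "\<And>\<omega>. \<omega> \<in> space M \<Longrightarrow> T \<omega> \<ge> 1"
    and "\<And>t. t \<ge> 1 \<Longrightarrow> {\<omega>\<in>space M. T \<omega> = t} \<in> sets (F (t + 1))"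
    and "AE \<omega> in M. T \<omega> \<le> B"
  shows "mFDR M H0 E P alpha T \<le> lvl"
proof (cases "integrable M (\<lambda>\<omega>. max (real (card (rej_set E P alpha (T \<omega>) \<omega>))) 1)")
  case True
  have "1 \<le> (\<integral>\<omega>. max (real (card (rej_set E P alpha (T \<omega>) \<omega>))) 1 \<partial>M)"
    using integral_mono[OF _ True, of "\<lambda>_. 1"] by (simp add: prob_space)
  then show ?thesis
    using expected_false_rejections_le[OF assms True]
    by (simp add: mFDR_def divide_le_eq)
next
  case False
  \<comment> \<open>The denominator of the mFDR is then the junk value 0, and x / 0 = 0.\<close>
  then show ?thesis
    using lvl_nonneg by (simp add: mFDR_def not_integrable_integral_eq)
qed

end

theorem theorem2:
  fixes M :: "'a measure" and H0 :: "nat set"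
    and E L :: "nat \<Rightarrow> nat" and lvl :: real
    and P alpha lam :: "nat \<Rightarrow> 'a \<Rightarrow> real"
    and T :: "'a \<Rightarrow> nat" and k :: proc_kind
  assumes prob: "prob_space M"
    and P_meas: "\<And>t. t \<ge> 1 \<Longrightarrow> P t \<in> borel_measurable M"
    and E_ge: "\<And>t. t \<ge> 1 \<Longrightarrow> E t \<ge> t"
    and L_lag: "\<And>t. t \<ge> 1 \<Longrightarrow> L (Suc t) \<le> L t + 1"
    and proc: "(k = LORD_star \<and> is_LORD_star M E L lvl P alpha)
             \<or> (k = SAFFRON_star \<and> is_SAFFRON_star M E L lvl P alpha lam)"
    and superunif: "\<And>t u. t \<in> H0 \<Longrightarrow> t \<ge> 1 \<Longrightarrow> 0 \<le> u \<Longrightarrow> u \<le> 1 \<Longrightarrow>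
           AE \<omega> in M. real_cond_exp M (noncf_sigma k M E L P alpha lam (E t))
                          (indicator {\<omega>\<in>space M. P t \<omega> \<le> u}) \<omega> \<le> u"
    and T_pos: "\<And>\<omega>. \<omega> \<in> space M \<Longrightarrow> T \<omega> \<ge> 1"
    and C1: "\<And>t. t \<ge> 1 \<Longrightarrow>
           {\<omega>\<in>space M. T \<omega> = t} \<in> sets (noncf_sigma k M E L P alpha lam (t + 1))"
    and C2: "\<exists>B. AE \<omega> in M. T \<omega> \<le> B"
  shows "mFDR M H0 E P alpha T \<le> lvl"
proof -
  interpret online_procedure M E L lvl P alpha lam k
    using prob P_meas E_ge L_lag proc
    by (simp add: online_procedure_def online_procedure_axioms_def)
  obtain B where "AE \<omega> in M. T \<omega> \<le> B"
    using C2 ..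
  moreover have "cond_superuniform M (F (E t)) (P t)" if "t \<in> H0" "t \<ge> 1" for t
    using superunif[OF that] by (simp add: cond_superuniform_def)
  ultimately show ?thesis
    using T_pos C1 by (intro mFDR_le)
qed

end
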